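(* For $n\ge 2$ and $k\ge 3$, \[a_{n,k}(213) = \sum_{j=2}^{n} b_{j,k}(213)\,a_{n+1-j,k}(213),\] where $a_{n,k}(213)$ is the number of cyclic permutations $\pi\in\mathfrak S_n$ whose one-line notation avoids $\delta_k=k(k-1)\cdots21$ and whose cycle form $C(\pi)$ avoids $213$, and $b_{n,k}(213)$ is the number of such permutations that additionally satisfy $\pi_1=n$.
   Context: A permutation $\pi\in\mathfrak S_n$ is cyclic if it consists of a single $n$-cycle. For cyclic $\pi$, $C(\pi)=(1,c_2,\dots,c_n)$ with $c_2=\pi(1)$, $c_{i+1}=\pi(c_i)$, viewed as the sequence $1c_2\cdots c_n$ for pattern avoidance. A sequence avoids a pattern $\sigma\in\mathfrak S_m$ if no subsequence of length $m$ is in the same relative order as $\sigma$. The one-line notation of $\pi$ is $\pi_1\cdots\pi_n$, $\pi_i=\pi(i)$. *)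

theory Defs
  imports "HOL-Combinatorics.Permutations"
begin

definition contains_pattern :: "nat list \<Rightarrow> nat list \<Rightarrow> bool" where
  "contains_pattern w \<sigma> \<longleftrightarrow>
     (\<exists>idx :: nat \<Rightarrow> nat.
        (\<forall>a b. a < b \<and> b < length \<sigma> \<longrightarrow> idx a < idx b) \<and>
        (\<forall>a < length \<sigma>. idx a < length w) \<and>
        (\<forall>a < length \<sigma>. \<forall>b < length \<sigma>. (w ! idx a < w ! idx b \<longleftrightarrow> \<sigma> ! a < \<sigma> ! b)))"

definition avoids :: "nat list \<Rightarrow> nat list \<Rightarrow> bool" where
  "avoids w \<sigma> \<longleftrightarrow> \<not> contains_pattern w \<sigma>"

definition one_line :: "nat \<Rightarrow> (nat \<Rightarrow> nat) \<Rightarrow> nat list" where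
  "one_line n \<pi> = map \<pi> [1..<n+1]"

definition cyclic_perm :: "nat \<Rightarrow> (nat \<Rightarrow> nat) \<Rightarrow> bool" where
  "cyclic_perm n \<pi> \<longleftrightarrow> (\<forall>x \<in> {1..n}. \<exists>i. (\<pi> ^^ i) 1 = x)"

definition cycle_form :: "nat \<Rightarrow> (nat \<Rightarrow> nat) \<Rightarrow> nat list" where
  "cycle_form n \<pi> = map (\<lambda>i. (\<pi> ^^ i) 1) [0..<n]"

definition delta :: "nat \<Rightarrow> nat list" where
  "delta k = rev [1..<k+1]"

definition a_213 :: "nat \<Rightarrow> nat \<Rightarrow> nat" where
  "a_213 n k = card {\<pi>. \<pi> permutes {1..n} \<and> cyclic_perm n \<pi> \<and>
       avoids (one_line n \<pi>) (delta k) \<and> avoids (cycle_form n \<pi>) [2,1,3]}"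

definition b_213 :: "nat \<Rightarrow> nat \<Rightarrow> nat" where
  "b_213 n k = card {\<pi>. \<pi> permutes {1..n} \<and> cyclic_perm n \<pi> \<and>
       avoids (one_line n \<pi>) (delta k) \<and> avoids (cycle_form n \<pi>) [2,1,3] \<and> \<pi> 1 = n}"

end

theory Submission
  imports Defs "HOL-Library.Sublist" "HOL-Combinatorics.Cycles"
begin

(* Write C(pi) = 1 m w with m = pi(1). Since m x y with x < m < y would be an occurrence
   of 213, every entry of w above m precedes every entry below m, so w = L S. Read as
   cycles, 1 m S gives a cyclic sigma of [m] with sigma(1) = m, and 1 followed by L shifted
   down by m - 1 gives a cyclic tau of [n + 1 - m]. Then pi = glue m sigma tau: it agrees
   with sigma below position m, and from position m on it is tau shifted up by m - 1, with
   the value 1 of tau replaced by sigma(m). Conversely, the glued cycle 1 m (shifted L) S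
   contains 213 iff C(sigma) or C(tau) does, and glue m sigma tau has a decreasing
   subsequence of length k iff sigma or tau has one, because sigma(m) is the only value
   <= m at a position >= m. Hence the pi with pi(1) = m correspond bijectively to the
   pairs counted by b(m,k) a(n+1-m,k). *)

section \<open>Subsequences and pattern containment\<close>

lemma subseq_map_iff: "subseq u (map f w) \<longleftrightarrow> (\<exists>v. subseq v w \<and> u = map f v)"
  by (metis nths_map subseq_conv_nths subseq_map)

lemma subseq_iff_indices:
  "subseq u w \<longleftrightarrow>
    (\<exists>ns. sorted_wrt (<) ns \<and> (\<forall>i\<in>set ns. i < length w) \<and> u = map ((!) w) ns)"
proof
  show "subseq u w \<Longrightarrow> \<exists>ns. sorted_wrt (<) ns \<and> (\<forall>i\<in>set ns. i < length w) \<and> u = map ((!) w) ns"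
  proof (induction rule: list_emb.induct)
    case (list_emb_Nil ys)
    show ?case by (intro exI[of _ "[]"]) simp
  next
    case (list_emb_Cons xs ys y)
    then obtain ns where "sorted_wrt (<) ns" "\<forall>i\<in>set ns. i < length ys" "xs = map ((!) ys) ns"
      by blast
    then show ?case by (intro exI[of _ "map Suc ns"]) (auto simp: sorted_wrt_map)
  next
    case (list_emb_Cons2 x y xs ys)
    then obtain ns where "sorted_wrt (<) ns" "\<forall>i\<in>set ns. i < length ys" "xs = map ((!) ys) ns"
      by blast
    with \<open>x = y\<close> show ?case
      by (intro exI[of _ "0 # map Suc ns"]) (auto simp: sorted_wrt_map)
  qed
next
  assume "\<exists>ns. sorted_wrt (<) ns \<and> (\<forall>i\<in>set ns. i < length w) \<and> u = map ((!) w) ns"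
  then obtain ns where ns: "sorted_wrt (<) ns" "\<forall>i\<in>set ns. i < length w" "u = map ((!) w) ns"
    by blast
  have "subseq ns [0..<length w]"
    using ns by (intro sorted_subset_imp_subseq) auto
  then have "subseq (map ((!) w) ns) (map ((!) w) [0..<length w])"
    by (rule subseq_map)
  then show "subseq u w"
    using ns(3) by (simp add: map_nth)
qed

lemma set_mono_subseq: "subseq xs ys \<Longrightarrow> set xs \<subseteq> set ys"
  by (auto elim: list_emb_set)

lemma sorted_wrt_subseq: "subseq xs ys \<Longrightarrow> sorted_wrt R ys \<Longrightarrow> sorted_wrt R xs"
  by (induction rule: list_emb.induct) (auto dest: list_emb_set)

lemma subseq_upt_iff: "subseq xs [a..<b] \<longleftrightarrow> sorted_wrt (<) xs \<and> set xs \<subseteq> {a..<b}"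
proof
  assume sub: "subseq xs [a..<b]"
  show "sorted_wrt (<) xs \<and> set xs \<subseteq> {a..<b}"
    using sorted_wrt_subseq[OF sub sorted_wrt_upt] set_mono_subseq[OF sub] by simp
next
  assume "sorted_wrt (<) xs \<and> set xs \<subseteq> {a..<b}"
  then show "subseq xs [a..<b]"
    by (intro sorted_subset_imp_subseq) auto
qed

lemma subseq_Cons_self: "subseq w (a # w)"
  by (intro list_emb.list_emb_Cons subseq_order.order_refl)

lemma sorted_wrt_conj:
  "sorted_wrt (\<lambda>x y. P x y \<and> Q x y) xs \<longleftrightarrow> sorted_wrt P xs \<and> sorted_wrt Q xs"
  by (induction xs) auto

lemma sorted_wrt_less_pair:
  fixes xs :: "'a::linorder list"
  assumes "sorted_wrt (\<lambda>x y. x < y \<and> P x y) xs" "x \<in> set xs" "y \<in> set xs" "x < y"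
  shows "P x y"
  using assms by (induction xs) (auto dest: less_asym)

lemma append_eq_append_separated:
  assumes "xs @ ys = xs' @ ys'" "\<forall>x\<in>set xs \<union> set xs'. P x" "\<forall>y\<in>set ys \<union> set ys'. \<not> P y"
  shows "xs = xs' \<and> ys = ys'"
proof -
  have "filter P (xs @ ys) = filter P (xs' @ ys')"
    "filter (Not \<circ> P) (xs @ ys) = filter (Not \<circ> P) (xs' @ ys')"
    using assms(1) by simp_all
  then show ?thesis
    using assms(2,3) by (simp add: filter_empty_conv filter_id_conv)
qed

definition order_isomorphic :: "nat list \<Rightarrow> nat list \<Rightarrow> bool" where
  "order_isomorphic u v \<longleftrightarrow>
    length u = length v \<and> (\<forall>a<length u. \<forall>b<length u. u ! a < u ! b \<longleftrightarrow> v ! a < v ! b)"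

lemma contains_pattern_iff_subseq:
  "contains_pattern w \<sigma> \<longleftrightarrow> (\<exists>u. subseq u w \<and> order_isomorphic u \<sigma>)"
proof
  assume "contains_pattern w \<sigma>"
  then obtain idx where mono: "\<forall>a b. a < b \<and> b < length \<sigma> \<longrightarrow> idx a < idx b"
    and bound: "\<forall>a<length \<sigma>. idx a < length w"
    and iso: "\<forall>a<length \<sigma>. \<forall>b<length \<sigma>. w ! idx a < w ! idx b \<longleftrightarrow> \<sigma> ! a < \<sigma> ! b"
    unfolding contains_pattern_def by blast
  let ?ns = "map idx [0..<length \<sigma>]"
  have "sorted_wrt (<) ?ns"
    using mono by (auto simp: sorted_wrt_iff_nth_less)
  then have "subseq (map ((!) w) ?ns) w"
    using bound unfolding subseq_iff_indices by (intro exI[of _ ?ns]) auto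
  moreover have "order_isomorphic (map ((!) w) ?ns) \<sigma>"
    using iso by (simp add: order_isomorphic_def)
  ultimately show "\<exists>u. subseq u w \<and> order_isomorphic u \<sigma>" by blast
next
  assume "\<exists>u. subseq u w \<and> order_isomorphic u \<sigma>"
  then obtain ns where ns: "sorted_wrt (<) ns" "\<forall>i\<in>set ns. i < length w"
    and iso: "order_isomorphic (map ((!) w) ns) \<sigma>"
    unfolding subseq_iff_indices by blast
  show "contains_pattern w \<sigma>"
    unfolding contains_pattern_def
  proof (intro exI[of _ "(!) ns"] conjI allI impI)
    show "ns ! a < ns ! b" if "a < b \<and> b < length \<sigma>" for a b
      using that iso sorted_wrt_nth_less[OF ns(1)] by (auto simp: order_isomorphic_def)
    show "ns ! a < length w" if "a < length \<sigma>" for a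
      using that iso ns(2) by (auto simp: order_isomorphic_def)
  qed (use iso in \<open>auto simp: order_isomorphic_def\<close>)
qed

lemma order_isomorphic_delta:
  "order_isomorphic u (delta k) \<longleftrightarrow> length u = k \<and> sorted_wrt (>) u"
proof -
  have delta_nth: "delta k ! a = k - a" if "a < k" for a
    using that unfolding delta_def by (simp add: rev_nth del: upt_Suc)
  have "(\<forall>a<k. \<forall>b<k. u ! a < u ! b \<longleftrightarrow> delta k ! a < delta k ! b) \<longleftrightarrow>
      (\<forall>i j. i < j \<longrightarrow> j < k \<longrightarrow> u ! j < u ! i)" (is "?iso \<longleftrightarrow> ?dec")
  proof
    show "?iso \<Longrightarrow> ?dec"
      by (auto simp: delta_nth)
    show "?dec \<Longrightarrow> ?iso"
    proof (intro allI impI)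
      fix a b assume ?dec "a < k" "b < k"
      then show "u ! a < u ! b \<longleftrightarrow> delta k ! a < delta k ! b"
        by (cases a b rule: linorder_cases) (auto simp: delta_nth dest: less_asym)
    qed
  qed
  moreover have "length (delta k) = k"
    unfolding delta_def by simp
  ultimately show ?thesis
    unfolding order_isomorphic_def sorted_wrt_iff_nth_less by auto
qed

lemma order_isomorphic_213:
  "order_isomorphic u [2,1,3] \<longleftrightarrow> (\<exists>x y z. u = [x,y,z] \<and> y < x \<and> x < z)"
proof -
  have iso3: "order_isomorphic [x,y,z] [2,1,3] \<longleftrightarrow> y < x \<and> x < z" for x y z :: nat
    unfolding order_isomorphic_def by (simp add: numeral_3_eq_3 All_less_Suc) auto
  have "\<exists>x y z. u = [x,y,z]" if "order_isomorphic u [2,1,3]"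
  proof -
    have "length u = 3"
      using that unfolding order_isomorphic_def by simp
    then show ?thesis
      by (auto simp: numeral_3_eq_3 length_Suc_conv)
  qed
  then show ?thesis
    using iso3 by blast
qed

definition has_decreasing :: "(nat \<Rightarrow> nat) \<Rightarrow> nat \<Rightarrow> nat \<Rightarrow> bool" where
  "has_decreasing p k n \<longleftrightarrow>
    (\<exists>xs. length xs = k \<and> set xs \<subseteq> {1..n} \<and> sorted_wrt (\<lambda>x y. x < y \<and> p y < p x) xs)"

lemma avoids_delta_iff: "avoids (one_line n p) (delta k) \<longleftrightarrow> \<not> has_decreasing p k n"
proof -
  have "contains_pattern (one_line n p) (delta k) \<longleftrightarrow>
      (\<exists>xs. subseq xs [1..<n+1] \<and> length xs = k \<and> sorted_wrt (>) (map p xs))"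
    unfolding contains_pattern_iff_subseq order_isomorphic_delta one_line_def subseq_map_iff
    by (metis length_map)
  also have "\<dots> \<longleftrightarrow> has_decreasing p k n"
    unfolding has_decreasing_def subseq_upt_iff sorted_wrt_conj sorted_wrt_map
    by (simp add: atLeastLessThanSuc_atLeastAtMost) (metis (no_types))
  finally show ?thesis
    unfolding avoids_def by simp
qed

definition contains_213 :: "nat list \<Rightarrow> bool" where
  "contains_213 w \<longleftrightarrow> (\<exists>x y z. subseq [x,y,z] w \<and> y < x \<and> x < z)"

lemma avoids_213_iff: "avoids w [2,1,3] \<longleftrightarrow> \<not> contains_213 w"
  unfolding avoids_def contains_pattern_iff_subseq order_isomorphic_213 contains_213_def
  by blast

lemma contains_213_subseq: "subseq u w \<Longrightarrow> contains_213 u \<Longrightarrow> contains_213 w"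
  unfolding contains_213_def using subseq_order.order_trans by blast

lemma contains_213_Cons_min:
  assumes "\<forall>y\<in>set w. a \<le> y"
  shows "contains_213 (a # w) \<longleftrightarrow> contains_213 w"
proof
  assume "contains_213 (a # w)"
  then obtain x y z where xyz: "subseq [x,y,z] (a # w)" "y < x" "x < z"
    unfolding contains_213_def by blast
  have "x \<noteq> a"
  proof
    assume "x = a"
    then have "y \<in> set w"
      using xyz(1) set_mono_subseq by fastforce
    then show False
      using assms xyz(2) \<open>x = a\<close> by auto
  qed
  then show "contains_213 w"
    using xyz unfolding contains_213_def by auto
next
  assume "contains_213 w"
  then show "contains_213 (a # w)"
    using contains_213_subseq subseq_Cons_self by blast
qed

lemma contains_213_map_strict_mono:
  assumes "strict_mono g"
  shows "contains_213 (map g w) \<longleftrightarrow> contains_213 w"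
proof
  assume "contains_213 (map g w)"
  then obtain v x y z where v: "subseq v w" "map g v = [x,y,z]" and "y < x" "x < z"
    unfolding contains_213_def subseq_map_iff by metis
  moreover obtain a b c where "v = [a,b,c]" "g a = x" "g b = y" "g c = z"
    using v(2) by (auto simp: map_eq_Cons_conv)
  ultimately show "contains_213 w"
    unfolding contains_213_def using strict_mono_less[OF assms] by blast
next
  assume "contains_213 w"
  then obtain x y z where "subseq [x,y,z] w" "y < x" "x < z"
    unfolding contains_213_def by blast
  then have "subseq [g x, g y, g z] (map g w)" "g y < g x" "g x < g z"
    using subseq_map[of "[x,y,z]" w g] strict_mono_less[OF assms] by auto
  then show "contains_213 (map g w)"
    unfolding contains_213_def by blast
qed

lemma contains_213_append:
  assumes above: "\<forall>x\<in>set L. \<forall>y\<in>set S. y < x"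
  shows "contains_213 (L @ S) \<longleftrightarrow> contains_213 L \<or> contains_213 S"
proof
  assume "contains_213 (L @ S)"
  then obtain x y z where xyz: "subseq [x,y,z] (L @ S)" "y < x" "x < z"
    unfolding contains_213_def by blast
  then obtain u v where split: "[x,y,z] = u @ v" "subseq u L" "subseq v S"
    by (auto simp: subseq_append_iff)
  have "x \<in> set u" if "u \<noteq> []"
    using split(1) that by (metis hd_append2 hd_in_set list.sel(1))
  moreover have "z \<in> set v" if "v \<noteq> []"
    using split(1) that by (metis last_appendR last_in_set last_ConsL last_ConsR list.distinct(1))
  moreover have "\<not> (x \<in> set u \<and> z \<in> set v)"
    using above xyz(3) set_mono_subseq[OF split(2)] set_mono_subseq[OF split(3)] by fastforce
  ultimately have "subseq [x,y,z] L \<or> subseq [x,y,z] S"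
    using split by fastforce
  then show "contains_213 L \<or> contains_213 S"
    using xyz unfolding contains_213_def by blast
next
  show "contains_213 L \<or> contains_213 S \<Longrightarrow> contains_213 (L @ S)"
    by (auto elim: contains_213_subseq[rotated])
qed

lemma not_contains_213_split:
  assumes "\<not> contains_213 (m # w)" "m \<notin> set w"
  shows "w = filter (\<lambda>x. m < x) w @ filter (\<lambda>x. x < m) w"
  using assms
proof (induction w)
  case (Cons a w)
  have "subseq (m # w) (m # a # w)"
    by (simp add: subseq_Cons_self)
  then have IH: "w = filter (\<lambda>x. m < x) w @ filter (\<lambda>x. x < m) w"
    using Cons contains_213_subseq by auto
  show ?case
  proof (cases "m < a")
    case False
    then have "a < m"
      using Cons.prems(2) by auto
    have "filter (\<lambda>x. m < x) w = []"
    proof (rule ccontr)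
      assume "filter (\<lambda>x. m < x) w \<noteq> []"
      then obtain y where "y \<in> set w" "m < y"
        by (auto simp: filter_empty_conv)
      then have "subseq [m,a,y] (m # a # w)"
        by (simp add: subseq_singleton_left)
      then show False
        using Cons.prems(1) \<open>a < m\<close> \<open>m < y\<close> unfolding contains_213_def by blast
    qed
    with IH \<open>a < m\<close> show ?thesis
      by simp
  qed (use IH in simp)
qed simp

section \<open>Cycle forms\<close>

lemma cyclic_perm_cycle_form:
  assumes p: "p permutes {1..n}" and cyc: "cyclic_perm n p" and n: "1 \<le> n"
  shows "distinct (cycle_form n p) \<and> set (cycle_form n p) = {1..n} \<and>
    cycle_of_list (cycle_form n p) = p"
proof -
  have perm: "permutation p"
    using p permutation_permutes by blast
  have "(p ^^ i) 1 \<in> {1..n}" for i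
    using permutes_in_image[OF permutes_funpow[OF p]] n by simp
  then have set_support: "set (support p 1) = {1..n}"
    using support_set[OF perm] cyc unfolding cyclic_perm_def by auto
  have "least_power p 1 = card (set (support p 1))"
    using distinct_card[OF cycle_of_permutation[OF perm]] by simp
  then have "least_power p 1 = n"
    using set_support by simp
  then have support: "cycle_form n p = support p 1"
    unfolding cycle_form_def by simp
  have "cycle_of_list (support p 1) = p"
  proof
    fix x
    show "cycle_of_list (support p 1) x = p x"
    proof (cases "x \<in> {1..n}")
      case True
      then show ?thesis
        using cycle_restrict[OF perm, of x 1] set_support by simp
    next
      case False
      then show ?thesis
        using id_outside_supp[of x "support p 1"] permutes_not_in[OF p False] set_support by simp
    qed
  qed
  then show ?thesis
    using support set_support cycle_of_permutation[OF perm] by simp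
qed

lemma cycle_form_inj:
  assumes "p permutes {1..n}" "cyclic_perm n p" "q permutes {1..n}" "cyclic_perm n q" "1 \<le> n"
    and "cycle_form n p = cycle_form n q"
  shows "p = q"
  using cyclic_perm_cycle_form[OF assms(1,2,5)] cyclic_perm_cycle_form[OF assms(3,4,5)] assms(6)
  by metis

lemma cycle_form_Cons: "1 \<le> n \<Longrightarrow> \<exists>w. cycle_form n p = 1 # w"
  unfolding cycle_form_def by (simp add: upt_conv_Cons)

lemma cycle_form_Cons_Cons: "2 \<le> n \<Longrightarrow> \<exists>w. cycle_form n p = 1 # p 1 # w"
  unfolding cycle_form_def by (simp add: upt_conv_Cons)

lemma set_cycle_form_tail:
  assumes p: "p permutes {1..n}" "cyclic_perm n p" and c: "cycle_form n p = 1 # w"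
  shows "distinct w \<and> 1 \<notin> set w \<and> set w = {2..n}"
proof -
  have "1 \<le> n"
    using c unfolding cycle_form_def by (cases n) auto
  then have "distinct (1 # w)" "set (1 # w) = {1..n}"
    using cyclic_perm_cycle_form[OF p] c by auto
  moreover have "{1..n} - {1} = {2..n}"
    by auto
  ultimately show ?thesis
    by (metis Diff_insert_absorb distinct.simps(2) list.simps(15))
qed

lemma set_cycle_form_tail_tail:
  assumes p: "p permutes {1..m}" "cyclic_perm m p" and c: "cycle_form m p = 1 # m # S"
  shows "set S = {2..<m}"
proof -
  have "m \<notin> set S" "set (m # S) = {2..m}"
    using set_cycle_form_tail[OF p c] by auto
  moreover have "{2..m} - {m} = {2..<m}"
    by auto
  ultimately show ?thesis
    by (metis Diff_insert_absorb list.simps(15))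
qed

lemma cycle_of_list_cyclic:
  assumes c: "distinct c" "set c = {1..n}" "hd c = 1"
  shows "cycle_of_list c permutes {1..n} \<and> cyclic_perm n (cycle_of_list c) \<and>
    cycle_form n (cycle_of_list c) = c"
proof -
  have len: "length c = n"
    using distinct_card[OF c(1)] c(2) by simp
  have iter: "(cycle_of_list c ^^ i) 1 = c ! i" if "i < n" for i
  proof -
    have "(cycle_of_list c ^^ i) (c ! 0) = rotate i c ! 0"
      using arg_cong[OF cyclic_rotation[OF c(1), of i], of "\<lambda>xs. xs ! 0"] that len by simp
    moreover have "c ! 0 = 1"
      using c(3) that len by (metis hd_conv_nth list.size(3) not_less_zero)
    ultimately show ?thesis
      using that len by (simp add: nth_rotate)
  qed
  have "cycle_form n (cycle_of_list c) = c"
    unfolding cycle_form_def using iter len by (intro nth_equalityI) auto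
  moreover have "cyclic_perm n (cycle_of_list c)"
    unfolding cyclic_perm_def using iter len c(2) by (metis in_set_conv_nth)
  ultimately show ?thesis
    using cycle_permutes[of c] c(2) by simp
qed

lemma eq_cycle_of_list:
  assumes "distinct c" "map q c = rotate1 c" "\<And>x. x \<notin> set c \<Longrightarrow> q x = x"
  shows "q = cycle_of_list c"
proof
  fix x
  have "map (cycle_of_list c) c = rotate1 c"
    using cyclic_rotation[OF assms(1), of 1] by simp
  then show "q x = cycle_of_list c x"
    using assms(2,3) id_outside_supp by (metis map_eq_conv)
qed

section \<open>Gluing two cyclic permutations\<close>

definition glue :: "nat \<Rightarrow> (nat \<Rightarrow> nat) \<Rightarrow> (nat \<Rightarrow> nat) \<Rightarrow> nat \<Rightarrow> nat" where
  "glue m \<sigma> \<tau> x =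
    (if x < m then \<sigma> x else if \<tau> (x - (m - 1)) = 1 then \<sigma> m else \<tau> (x - (m - 1)) + (m - 1))"

lemma glue_low: "x < m \<Longrightarrow> glue m \<sigma> \<tau> x = \<sigma> x"
  unfolding glue_def by simp

lemma glue_high:
  "1 \<le> y \<Longrightarrow> glue m \<sigma> \<tau> (y + (m - 1)) = (if \<tau> y = 1 then \<sigma> m else \<tau> y + (m - 1))"
  unfolding glue_def by auto

lemma glue_outside:
  assumes "\<sigma> permutes {1..m}" "\<tau> permutes {1..n'}" "1 \<le> m" "1 \<le> n'" "x \<notin> {1..m + n' - 1}"
  shows "glue m \<sigma> \<tau> x = x"
proof (cases "x < m")
  case True
  then have "x \<notin> {1..m}"
    using assms(4,5) by auto
  then show ?thesis
    using True assms(1) by (simp add: glue_low permutes_not_in)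
next
  case False
  then have "x - (m - 1) \<notin> {1..n'}" "x - (m - 1) \<noteq> 1"
    using assms(3,4,5) by auto
  then show ?thesis
    using False assms(2) by (simp add: glue_def permutes_not_in)
qed

lemma glue_rotates_glued_cycle:
  assumes \<sigma>: "\<sigma> permutes {1..m}" "cyclic_perm m \<sigma>" and m: "2 \<le> m"
    and \<tau>: "\<tau> permutes {1..n'}" "cyclic_perm n' \<tau>" and n': "1 \<le> n'"
    and c\<sigma>: "cycle_form m \<sigma> = 1 # m # S" and c\<tau>: "cycle_form n' \<tau> = 1 # L"
  shows "map (glue m \<sigma> \<tau>) (1 # m # map (\<lambda>x. x + (m - 1)) L @ S) =
    rotate1 (1 # m # map (\<lambda>x. x + (m - 1)) L @ S)"
proof -
  let ?Lm = "map (\<lambda>x. x + (m - 1)) L"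
  have d\<sigma>: "distinct (1 # m # S)" "cycle_of_list (1 # m # S) = \<sigma>"
    using cyclic_perm_cycle_form[OF \<sigma>] m c\<sigma> by auto
  have d\<tau>: "distinct (1 # L)" "cycle_of_list (1 # L) = \<tau>"
    using cyclic_perm_cycle_form[OF \<tau> n'] c\<tau> by auto
  have S: "set S = {2..<m}"
    using set_cycle_form_tail_tail[OF \<sigma> c\<sigma>] .
  have L: "set L = {2..n'}"
    using set_cycle_form_tail[OF \<tau> c\<tau>] by simp
  have "map \<sigma> (1 # m # S) = rotate1 (1 # m # S)"
    using cyclic_rotation[OF d\<sigma>(1), of 1, unfolded d\<sigma>(2)] by simp
  then have \<sigma>1: "\<sigma> 1 = m" and \<sigma>S: "\<sigma> m # map \<sigma> S = S @ [1]"
    by auto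
  have \<tau>L: "map \<tau> (1 # L) = L @ [1]"
    using cyclic_rotation[OF d\<tau>(1), of 1, unfolded d\<tau>(2)] by simp
  have "map (glue m \<sigma> \<tau>) (m # ?Lm) = map (glue m \<sigma> \<tau> \<circ> (\<lambda>y. y + (m - 1))) (1 # L)"
    using m by simp
  also have "\<dots> = map (\<lambda>v. if v = 1 then \<sigma> m else v + (m - 1)) (map \<tau> (1 # L))"
    unfolding map_map
  proof (rule map_cong[OF refl])
    fix y assume "y \<in> set (1 # L)"
    then have "1 \<le> y"
      using L by auto
    then show "(glue m \<sigma> \<tau> \<circ> (\<lambda>y. y + (m - 1))) y =
        ((\<lambda>v. if v = 1 then \<sigma> m else v + (m - 1)) \<circ> \<tau>) y"
      using glue_high[OF \<open>1 \<le> y\<close>] by simp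
  qed
  also have "\<dots> = ?Lm @ [\<sigma> m]"
    unfolding \<tau>L using L by simp
  finally have high: "map (glue m \<sigma> \<tau>) (m # ?Lm) = ?Lm @ [\<sigma> m]" .
  have low: "map (glue m \<sigma> \<tau>) S = map \<sigma> S"
    using S by (simp add: glue_low)
  have "map (glue m \<sigma> \<tau>) (1 # m # ?Lm @ S) =
      glue m \<sigma> \<tau> 1 # map (glue m \<sigma> \<tau>) (m # ?Lm) @ map (glue m \<sigma> \<tau>) S"
    by simp
  also have "\<dots> = m # (?Lm @ [\<sigma> m]) @ map \<sigma> S"
    unfolding high low using \<sigma>1 m by (simp add: glue_low)
  also have "\<dots> = rotate1 (1 # m # ?Lm @ S)"
    using \<sigma>S by simp
  finally show ?thesis .
qed

lemma glued_cycle_distinct_set: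
  fixes m n' :: nat and S L :: "nat list"
  assumes S: "distinct S" "set S = {2..<m}" and L: "distinct L" "set L = {2..n'}"
    and m: "2 \<le> m" and n': "1 \<le> n'"
  shows "distinct (1 # m # map (\<lambda>x. x + (m - 1)) L @ S) \<and>
    set (1 # m # map (\<lambda>x. x + (m - 1)) L @ S) = {1..m + n' - 1}"
proof
  let ?Lm = "map (\<lambda>x. x + (m - 1)) L"
  have "distinct ?Lm"
    using L(1) by (simp add: distinct_map)
  moreover have "\<forall>x\<in>set ?Lm. m < x"
    using L(2) m by auto
  ultimately show "distinct (1 # m # ?Lm @ S)"
    using S m by auto
  have "set ?Lm = {2 + (m - 1)..n' + (m - 1)}"
    using L(2) by (simp only: set_map image_add_atLeastAtMost')
  then have "set (1 # m # ?Lm @ S) = insert 1 (insert m ({m + 1..m + n' - 1} \<union> {2..<m}))"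
    using S(2) m by (simp add: ac_simps)
  also have "\<dots> = {1..m + n' - 1}"
    using m n' by (rule_tac set_eqI) (simp, linarith)
  finally show "set (1 # m # ?Lm @ S) = {1..m + n' - 1}" .
qed

lemma cycle_form_glue:
  assumes \<sigma>: "\<sigma> permutes {1..m}" "cyclic_perm m \<sigma>" and m: "2 \<le> m"
    and \<tau>: "\<tau> permutes {1..n'}" "cyclic_perm n' \<tau>" and n': "1 \<le> n'"
    and c\<sigma>: "cycle_form m \<sigma> = 1 # m # S" and c\<tau>: "cycle_form n' \<tau> = 1 # L"
  shows "glue m \<sigma> \<tau> permutes {1..m + n' - 1} \<and> cyclic_perm (m + n' - 1) (glue m \<sigma> \<tau>) \<and>
    cycle_form (m + n' - 1) (glue m \<sigma> \<tau>) = 1 # m # map (\<lambda>x. x + (m - 1)) L @ S"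
proof -
  let ?c = "1 # m # map (\<lambda>x. x + (m - 1)) L @ S"
  have "distinct S" "set S = {2..<m}"
    using set_cycle_form_tail[OF \<sigma> c\<sigma>] set_cycle_form_tail_tail[OF \<sigma> c\<sigma>] by auto
  moreover have "distinct L" "set L = {2..n'}"
    using set_cycle_form_tail[OF \<tau> c\<tau>] by auto
  ultimately have dist: "distinct ?c" and set_c: "set ?c = {1..m + n' - 1}"
    using glued_cycle_distinct_set m n' by blast+
  have outside: "glue m \<sigma> \<tau> x = x" if "x \<notin> set ?c" for x
    using glue_outside[OF \<sigma>(1) \<tau>(1) _ n' that[unfolded set_c]] m by simp
  have "glue m \<sigma> \<tau> = cycle_of_list ?c"
    using dist glue_rotates_glued_cycle[OF assms] outside by (rule eq_cycle_of_list)
  then show ?thesis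
    using cycle_of_list_cyclic[OF dist set_c list.sel(1)] by simp
qed

lemma permutes_one_le:
  assumes "\<tau> permutes {1..n}" "1 \<le> y"
  shows "1 \<le> \<tau> y"
  using permutes_in_image[OF assms(1), of y] permutes_not_in[OF assms(1), of y] assms(2)
  by (cases "y \<le> n") auto

context
  fixes m n' :: nat and \<sigma> \<tau> :: "nat \<Rightarrow> nat"
  assumes \<sigma>: "\<sigma> permutes {1..m}" and \<tau>: "\<tau> permutes {1..n'}" and m: "1 \<le> m"
begin

lemma glue_high_less_iff:
  assumes "1 \<le> y" "1 \<le> y'"
  shows "glue m \<sigma> \<tau> (y + (m - 1)) < glue m \<sigma> \<tau> (y' + (m - 1)) \<longleftrightarrow> \<tau> y < \<tau> y'"
  unfolding glue_high[OF assms(1)] glue_high[OF assms(2)]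
  using permutes_in_image[OF \<sigma>, of m] m permutes_one_le[OF \<tau> assms(1)]
    permutes_one_le[OF \<tau> assms(2)]
  by auto

lemma has_decreasing_glue_right:
  assumes "has_decreasing \<tau> k n'"
  shows "has_decreasing (glue m \<sigma> \<tau>) k (m + n' - 1)"
proof -
  obtain xs where xs: "length xs = k" "set xs \<subseteq> {1..n'}"
    "sorted_wrt (\<lambda>x y. x < y \<and> \<tau> y < \<tau> x) xs"
    using assms unfolding has_decreasing_def by blast
  let ?ys = "map (\<lambda>y. y + (m - 1)) xs"
  have "sorted_wrt (\<lambda>x y. x < y \<and> glue m \<sigma> \<tau> y < glue m \<sigma> \<tau> x) ?ys"
    using xs(3)
  proof (rule sorted_wrt_map_mono)
    fix x y assume "x \<in> set xs" "y \<in> set xs" "x < y \<and> \<tau> y < \<tau> x"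
    then show "x + (m - 1) < y + (m - 1) \<and>
        glue m \<sigma> \<tau> (y + (m - 1)) < glue m \<sigma> \<tau> (x + (m - 1))"
      using xs(2) glue_high_less_iff[of y x] by auto
  qed
  moreover have "set ?ys \<subseteq> {1..m + n' - 1}"
    using xs(2) m by fastforce
  ultimately show ?thesis
    using xs(1) unfolding has_decreasing_def by (intro exI[of _ ?ys]) simp
qed

lemma has_decreasing_glue_left:
  assumes n': "1 \<le> n'" and dec: "has_decreasing \<sigma> k m"
  shows "has_decreasing (glue m \<sigma> \<tau>) k (m + n' - 1)"
proof -
  obtain xs where xs: "length xs = k" "set xs \<subseteq> {1..m}"
    "sorted_wrt (\<lambda>x y. x < y \<and> \<sigma> y < \<sigma> x) xs"
    using dec unfolding has_decreasing_def by blast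
  obtain q where q: "q \<in> {1..n'}" "\<tau> q = 1"
    using permutes_image[OF \<tau>] n' by (metis atLeastAtMost_iff imageE order_refl)
  define \<phi> where "\<phi> x = (if x = m then q + (m - 1) else x)" for x
  have glue_\<phi>: "glue m \<sigma> \<tau> (\<phi> x) = \<sigma> x" if "x \<in> {1..m}" for x
    using that q glue_high[of q m \<sigma> \<tau>] by (auto simp: \<phi>_def glue_low)
  have \<phi>_less: "\<phi> x < \<phi> y" if "x < y" "y \<in> {1..m}" for x y
    using that q by (auto simp: \<phi>_def)
  let ?ys = "map \<phi> xs"
  have "sorted_wrt (\<lambda>x y. x < y \<and> glue m \<sigma> \<tau> y < glue m \<sigma> \<tau> x) ?ys"
    using xs(3)
  proof (rule sorted_wrt_map_mono)
    fix x y assume xy: "x \<in> set xs" "y \<in> set xs" "x < y \<and> \<sigma> y < \<sigma> x"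
    then have "x \<in> {1..m}" "y \<in> {1..m}"
      using xs(2) by auto
    then show "\<phi> x < \<phi> y \<and> glue m \<sigma> \<tau> (\<phi> y) < glue m \<sigma> \<tau> (\<phi> x)"
      using xy(3) glue_\<phi> \<phi>_less by simp
  qed
  moreover have "set ?ys \<subseteq> {1..m + n' - 1}"
    using xs(2) q by (force simp: \<phi>_def)
  ultimately show ?thesis
    using xs(1) unfolding has_decreasing_def by (intro exI[of _ ?ys]) simp
qed

lemma has_decreasing_right_if_high:
  assumes xs: "length xs = k" "set xs \<subseteq> {m..m + n' - 1}"
    and sorted: "sorted_wrt (\<lambda>x y. x < y \<and> glue m \<sigma> \<tau> y < glue m \<sigma> \<tau> x) xs"
  shows "has_decreasing \<tau> k n'"
proof -
  let ?ys = "map (\<lambda>x. x - (m - 1)) xs"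
  have "sorted_wrt (\<lambda>x y. x < y \<and> \<tau> y < \<tau> x) ?ys"
    using sorted
  proof (rule sorted_wrt_map_mono)
    fix x y
    assume xy: "x \<in> set xs" "y \<in> set xs" "x < y \<and> glue m \<sigma> \<tau> y < glue m \<sigma> \<tau> x"
    then have high: "m \<le> x" "m \<le> y"
      using xs(2) by auto
    then have pos: "1 \<le> x - (m - 1)" "1 \<le> y - (m - 1)"
      using m by auto
    have "x - (m - 1) + (m - 1) = x" "y - (m - 1) + (m - 1) = y"
      using high m by auto
    then have "\<tau> (y - (m - 1)) < \<tau> (x - (m - 1))"
      using xy(3) glue_high_less_iff[OF pos(2,1)] by simp
    moreover have "x - (m - 1) < y - (m - 1)"
      using xy(3) pos by auto
    ultimately show "x - (m - 1) < y - (m - 1) \<and> \<tau> (y - (m - 1)) < \<tau> (x - (m - 1))"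
      by blast
  qed
  moreover have "set ?ys \<subseteq> {1..n'}"
    using xs(2) m by fastforce
  ultimately show ?thesis
    using xs(1) unfolding has_decreasing_def by (intro exI[of _ ?ys]) simp
qed

lemma has_decreasing_left_if_low:
  assumes xs: "length xs = k" "set xs \<subseteq> {1..m + n' - 1}" and x\<^sub>0: "x\<^sub>0 \<in> set xs" "x\<^sub>0 < m"
    and sorted: "sorted_wrt (\<lambda>x y. x < y \<and> glue m \<sigma> \<tau> y < glue m \<sigma> \<tau> x) xs"
  shows "has_decreasing \<sigma> k m"
proof -
  let ?\<pi> = "glue m \<sigma> \<tau>"
  \<comment> \<open>Values after position x0 are below \<sigma> x0 \<le> m, and from position m on the only
    value \<le> m is \<sigma> m.\<close>
  have \<pi>_min: "?\<pi> y = \<sigma> (min y m)" if "y \<in> set xs" for y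
  proof (cases "y < m")
    case True
    then show ?thesis
      by (simp add: glue_low)
  next
    case False
    then have "?\<pi> y < ?\<pi> x\<^sub>0"
      using sorted_wrt_less_pair[OF sorted x\<^sub>0(1) that] x\<^sub>0(2) by simp
    also have "\<dots> \<le> m"
      using x\<^sub>0 xs(2) permutes_in_image[OF \<sigma>, of x\<^sub>0] by (auto simp: glue_low)
    finally have "?\<pi> y < m" .
    define y' where "y' = y - (m - 1)"
    have y': "y = y' + (m - 1)" "1 \<le> y'"
      using False m unfolding y'_def by auto
    have "?\<pi> y = (if \<tau> y' = 1 then \<sigma> m else \<tau> y' + (m - 1))"
      unfolding y'(1) by (rule glue_high[OF y'(2)])
    then show ?thesis
      using \<open>?\<pi> y < m\<close> permutes_one_le[OF \<tau> y'(2)] False by (auto split: if_splits)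
  qed
  let ?ys = "map (\<lambda>y. min y m) xs"
  have "sorted_wrt (\<lambda>x y. x < y \<and> \<sigma> y < \<sigma> x) ?ys"
    using sorted
  proof (rule sorted_wrt_map_mono)
    fix x y assume xy: "x \<in> set xs" "y \<in> set xs" "x < y \<and> ?\<pi> y < ?\<pi> x"
    then have "\<sigma> (min y m) < \<sigma> (min x m)"
      using \<pi>_min by simp
    moreover have "min x m \<le> min y m"
      using xy(3) by (simp add: min_def)
    ultimately show "min x m < min y m \<and> \<sigma> (min y m) < \<sigma> (min x m)"
      using order_le_neq_trans by fastforce
  qed
  moreover have "set ?ys \<subseteq> {1..m}"
    using xs(2) m by auto
  ultimately show ?thesis
    using xs(1) unfolding has_decreasing_def by (intro exI[of _ ?ys]) simp
qed

lemma has_decreasing_glue_split: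
  assumes "has_decreasing (glue m \<sigma> \<tau>) k (m + n' - 1)"
  shows "has_decreasing \<sigma> k m \<or> has_decreasing \<tau> k n'"
proof -
  obtain xs where xs: "length xs = k" "set xs \<subseteq> {1..m + n' - 1}"
    and sorted: "sorted_wrt (\<lambda>x y. x < y \<and> glue m \<sigma> \<tau> y < glue m \<sigma> \<tau> x) xs"
    using assms unfolding has_decreasing_def by blast
  show ?thesis
  proof (cases "\<forall>x\<in>set xs. m \<le> x")
    case True
    then have "set xs \<subseteq> {m..m + n' - 1}"
      using xs(2) by auto
    then show ?thesis
      using has_decreasing_right_if_high[OF xs(1) _ sorted] by blast
  next
    case False
    then show ?thesis
      using has_decreasing_left_if_low[OF xs _ _ sorted] by (meson not_le)
  qed
qed

lemma has_decreasing_glue: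
  "1 \<le> n' \<Longrightarrow>
    has_decreasing (glue m \<sigma> \<tau>) k (m + n' - 1) \<longleftrightarrow> has_decreasing \<sigma> k m \<or> has_decreasing \<tau> k n'"
  using has_decreasing_glue_split has_decreasing_glue_left has_decreasing_glue_right by blast

end

lemma contains_213_glued_cycle:
  assumes S: "\<forall>x\<in>set S. 1 \<le> x \<and> x < m" and L: "\<forall>x\<in>set L. 2 \<le> x" and m: "1 \<le> m"
  shows "contains_213 (1 # m # map (\<lambda>x. x + (m - 1)) L @ S) \<longleftrightarrow>
    contains_213 (1 # m # S) \<or> contains_213 (1 # L)"
proof -
  let ?Lm = "map (\<lambda>x. x + (m - 1)) L"
  have Lm: "\<forall>x\<in>set ?Lm. m < x"
    using L m by auto
  have single: "\<not> contains_213 [m]"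
    unfolding contains_213_def by simp
  have "contains_213 (1 # m # ?Lm @ S) \<longleftrightarrow> contains_213 ((m # ?Lm) @ S)"
    using contains_213_Cons_min[of "m # ?Lm @ S" 1] Lm S m by fastforce
  also have "\<dots> \<longleftrightarrow> contains_213 (m # ?Lm) \<or> contains_213 S"
    by (rule contains_213_append) (use Lm S in fastforce)
  also have "\<dots> \<longleftrightarrow> contains_213 L \<or> contains_213 S"
    using contains_213_Cons_min[of ?Lm m] Lm contains_213_map_strict_mono[OF strict_mono_add]
    by fastforce
  also have "\<dots> \<longleftrightarrow> contains_213 (1 # m # S) \<or> contains_213 (1 # L)"
  proof -
    have "contains_213 (1 # m # S) \<longleftrightarrow> contains_213 ([m] @ S)"
      using contains_213_Cons_min[of "m # S" 1] S m by fastforce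
    also have "\<dots> \<longleftrightarrow> contains_213 S"
      using contains_213_append[of "[m]" S] S single by fastforce
    finally show ?thesis
      using contains_213_Cons_min[of L 1] L by fastforce
  qed
  finally show ?thesis .
qed

section \<open>The recurrence\<close>

definition cyclic_avoiders :: "nat \<Rightarrow> nat \<Rightarrow> (nat \<Rightarrow> nat) set" where
  "cyclic_avoiders n k = {\<pi>. \<pi> permutes {1..n} \<and> cyclic_perm n \<pi> \<and>
     avoids (one_line n \<pi>) (delta k) \<and> avoids (cycle_form n \<pi>) [2,1,3]}"

lemma glue_mem_iff:
  assumes \<sigma>: "\<sigma> permutes {1..m}" "cyclic_perm m \<sigma>" and \<sigma>1: "\<sigma> 1 = m" and m: "2 \<le> m"
    and \<tau>: "\<tau> permutes {1..n'}" "cyclic_perm n' \<tau>" and n': "1 \<le> n'"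
  shows "glue m \<sigma> \<tau> \<in> cyclic_avoiders (m + n' - 1) k \<longleftrightarrow>
    \<sigma> \<in> cyclic_avoiders m k \<and> \<tau> \<in> cyclic_avoiders n' k"
proof -
  obtain S where c\<sigma>: "cycle_form m \<sigma> = 1 # m # S"
    using cycle_form_Cons_Cons[OF m, of \<sigma>] \<sigma>1 by auto
  obtain L where c\<tau>: "cycle_form n' \<tau> = 1 # L"
    using cycle_form_Cons[OF n'] by auto
  note glue = cycle_form_glue[OF \<sigma> m \<tau> n' c\<sigma> c\<tau>]
  have S: "\<forall>x\<in>set S. 1 \<le> x \<and> x < m"
    using set_cycle_form_tail_tail[OF \<sigma> c\<sigma>] by simp
  have L: "\<forall>x\<in>set L. 2 \<le> x"
    using set_cycle_form_tail[OF \<tau> c\<tau>] by simp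
  have "contains_213 (cycle_form (m + n' - 1) (glue m \<sigma> \<tau>)) \<longleftrightarrow>
      contains_213 (cycle_form m \<sigma>) \<or> contains_213 (cycle_form n' \<tau>)"
    unfolding glue[THEN conjunct2, THEN conjunct2] c\<sigma> c\<tau>
    using S L m by (intro contains_213_glued_cycle) auto
  moreover have "has_decreasing (glue m \<sigma> \<tau>) k (m + n' - 1) \<longleftrightarrow>
      has_decreasing \<sigma> k m \<or> has_decreasing \<tau> k n'"
    using has_decreasing_glue[OF \<sigma>(1) \<tau>(1) _ n'] m by simp
  ultimately show ?thesis
    using glue \<sigma> \<tau> unfolding cyclic_avoiders_def avoids_delta_iff avoids_213_iff by auto
qed

lemma glue_inj:
  assumes \<sigma>: "\<sigma> permutes {1..m}" "cyclic_perm m \<sigma>" "\<sigma> 1 = m"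
    and \<sigma>': "\<sigma>' permutes {1..m}" "cyclic_perm m \<sigma>'" "\<sigma>' 1 = m" and m: "2 \<le> m"
    and \<tau>: "\<tau> permutes {1..n'}" "cyclic_perm n' \<tau>"
    and \<tau>': "\<tau>' permutes {1..n'}" "cyclic_perm n' \<tau>'" and n': "1 \<le> n'"
    and eq: "glue m \<sigma> \<tau> = glue m \<sigma>' \<tau>'"
  shows "\<sigma> = \<sigma>' \<and> \<tau> = \<tau>'"
proof -
  let ?shift = "map (\<lambda>x. x + (m - 1))"
  obtain S S' where c\<sigma>: "cycle_form m \<sigma> = 1 # m # S" and c\<sigma>': "cycle_form m \<sigma>' = 1 # m # S'"
    using cycle_form_Cons_Cons[OF m] \<sigma>(3) \<sigma>'(3) by metis
  obtain L L' where c\<tau>: "cycle_form n' \<tau> = 1 # L" and c\<tau>': "cycle_form n' \<tau>' = 1 # L'"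
    using cycle_form_Cons[OF n'] by metis
  have "1 # m # ?shift L @ S = 1 # m # ?shift L' @ S'"
    using cycle_form_glue[OF \<sigma>(1,2) m \<tau> n' c\<sigma> c\<tau>] cycle_form_glue[OF \<sigma>'(1,2) m \<tau>' n' c\<sigma>' c\<tau>']
      eq by simp
  then have joined: "?shift L @ S = ?shift L' @ S'"
    by simp
  have S: "\<forall>x\<in>set S \<union> set S'. \<not> m < x"
    using set_cycle_form_tail_tail[OF \<sigma>(1,2) c\<sigma>] set_cycle_form_tail_tail[OF \<sigma>'(1,2) c\<sigma>'] by simp
  have L: "\<forall>x\<in>set (?shift L) \<union> set (?shift L'). m < x"
  proof
    fix x assume "x \<in> set (?shift L) \<union> set (?shift L')"
    then obtain y where y: "y \<in> set L \<union> set L'" "x = y + (m - 1)"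
      by auto
    then have "2 \<le> y"
      using set_cycle_form_tail[OF \<tau> c\<tau>] set_cycle_form_tail[OF \<tau>' c\<tau>'] by auto
    then show "m < x"
      using y(2) m by simp
  qed
  obtain "?shift L = ?shift L'" "S = S'"
    using append_eq_append_separated[OF joined L S] by blast
  then have "L = L'"
    by (simp add: strict_mono_imp_inj_on[OF strict_mono_add])
  with \<open>S = S'\<close> show ?thesis
    using cycle_form_inj[OF \<sigma>(1,2) \<sigma>'(1,2)] cycle_form_inj[OF \<tau> \<tau>'] c\<sigma> c\<sigma>' c\<tau> c\<tau>' m n'
    by auto
qed

lemma cycle_form_split_213:
  assumes \<pi>: "\<pi> permutes {1..n}" "cyclic_perm n \<pi>" and n: "2 \<le> n"
    and avoid: "\<not> contains_213 (cycle_form n \<pi>)"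
  obtains L S where "cycle_form n \<pi> = 1 # \<pi> 1 # L @ S" "2 \<le> \<pi> 1" "\<pi> 1 \<le> n"
    "distinct L" "set L = {\<pi> 1<..n}" "distinct S" "set S = {2..<\<pi> 1}"
proof -
  define m where "m = \<pi> 1"
  obtain w where c: "cycle_form n \<pi> = 1 # m # w"
    using cycle_form_Cons_Cons[OF n] unfolding m_def by blast
  have dw: "distinct (m # w)" and set_mw: "set (m # w) = {2..n}"
    using set_cycle_form_tail[OF \<pi> c] by auto
  then have m: "2 \<le> m" "m \<le> n"
    by auto
  have set_w: "set w = {2..n} - {m}"
    using dw set_mw by (metis Diff_insert_absorb distinct.simps(2) list.simps(15))
  define L S where "L = filter (\<lambda>x. m < x) w" and "S = filter (\<lambda>x. x < m) w"
  have "\<not> contains_213 (m # w)"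
    using avoid c contains_213_subseq[OF subseq_Cons_self] by metis
  then have "w = L @ S"
    using not_contains_213_split dw unfolding L_def S_def by simp
  moreover have "set L = {m<..n}" "set S = {2..<m}"
    unfolding S_def L_def set_filter set_w using m by auto
  moreover have "distinct L" "distinct S"
    using dw unfolding L_def S_def by simp_all
  ultimately show thesis
    using that c m unfolding m_def by blast
qed

lemma unshift_list:
  fixes L :: "nat list"
  assumes L: "distinct L" "set L = {m<..n}" and m: "1 \<le> m" "m \<le> n"
  obtains L' where "map (\<lambda>x. x + (m - 1)) L' = L" "distinct L'" "set L' = {2..n + 1 - m}"
proof -
  define L' where "L' = map (\<lambda>x. x - (m - 1)) L"
  have shift: "map (\<lambda>x. x + (m - 1)) L' = L"
    unfolding L'_def map_map using L(2) m by (intro map_idI) auto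
  have "(\<lambda>x. x + (m - 1)) ` {2..n + 1 - m} = {2 + (m - 1)..n + 1 - m + (m - 1)}"
    by (rule image_add_atLeastAtMost')
  also have "\<dots> = {m<..n}"
    using m by auto
  also have "\<dots> = (\<lambda>x. x + (m - 1)) ` set L'"
    using arg_cong[OF shift, of set] L(2) by simp
  finally have "set L' = {2..n + 1 - m}"
    using inj_image_eq_iff[OF strict_mono_imp_inj_on[OF strict_mono_add]] by metis
  moreover have "distinct L'"
    using arg_cong[OF shift, of distinct] L(1) by (simp add: distinct_map)
  ultimately show thesis
    using that shift by blast
qed

lemma glue_decomposition:
  assumes \<pi>: "\<pi> permutes {1..n}" "cyclic_perm n \<pi>" and n: "2 \<le> n"
    and avoid: "\<not> contains_213 (cycle_form n \<pi>)"
  obtains \<sigma> \<tau> where "\<sigma> permutes {1..\<pi> 1}" "cyclic_perm (\<pi> 1) \<sigma>" "\<sigma> 1 = \<pi> 1"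
    "\<tau> permutes {1..n + 1 - \<pi> 1}" "cyclic_perm (n + 1 - \<pi> 1) \<tau>" "\<pi> = glue (\<pi> 1) \<sigma> \<tau>"
proof -
  define m where "m = \<pi> 1"
  define n' where "n' = n + 1 - m"
  obtain L S where c: "cycle_form n \<pi> = 1 # m # L @ S" and m: "2 \<le> m" "m \<le> n"
    and L: "distinct L" "set L = {m<..n}" and S: "distinct S" "set S = {2..<m}"
    using cycle_form_split_213[OF assms] unfolding m_def by blast
  obtain L' where shift: "map (\<lambda>x. x + (m - 1)) L' = L"
    and L': "distinct L'" "set L' = {2..n'}"
    using unshift_list[OF L] m unfolding n'_def by auto
  have "distinct (1 # m # S)" "set (1 # m # S) = {1..m}"
    using S m by auto
  then have \<sigma>: "cycle_of_list (1 # m # S) permutes {1..m}"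
    "cyclic_perm m (cycle_of_list (1 # m # S))" "cycle_form m (cycle_of_list (1 # m # S)) = 1 # m # S"
    using cycle_of_list_cyclic[of "1 # m # S" m] by auto
  have \<sigma>1: "cycle_of_list (1 # m # S) 1 = m"
    using cycle_form_Cons_Cons[OF m(1), of "cycle_of_list (1 # m # S)"] \<sigma>(3) by auto
  have "distinct (1 # L')" "set (1 # L') = {1..n'}"
    using L' m unfolding n'_def by auto
  then have \<tau>: "cycle_of_list (1 # L') permutes {1..n'}" "cyclic_perm n' (cycle_of_list (1 # L'))"
    "cycle_form n' (cycle_of_list (1 # L')) = 1 # L'"
    using cycle_of_list_cyclic[of "1 # L'" n'] by auto
  have n': "1 \<le> n'" "m + n' - 1 = n"
    using m unfolding n'_def by auto
  have "\<pi> = glue m (cycle_of_list (1 # m # S)) (cycle_of_list (1 # L'))"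
    using cycle_form_glue[OF \<sigma>(1,2) m(1) \<tau>(1,2) n'(1) \<sigma>(3) \<tau>(3)] shift c n'(2)
    by (intro cycle_form_inj[OF \<pi>]) (use n in auto)
  then show thesis
    using that \<sigma>(1,2) \<sigma>1 \<tau>(1,2) unfolding m_def n'_def by blast
qed

lemma a_213_eq_card: "a_213 n k = card (cyclic_avoiders n k)"
  unfolding a_213_def cyclic_avoiders_def ..

lemma b_213_eq_card: "b_213 n k = card {\<pi> \<in> cyclic_avoiders n k. \<pi> 1 = n}"
  unfolding b_213_def cyclic_avoiders_def by (simp add: conj_assoc)

lemma finite_cyclic_avoiders: "finite (cyclic_avoiders n k)"
  by (rule finite_subset[OF _ finite_permutations[of "{1..n}"]]) (auto simp: cyclic_avoiders_def)

lemma cyclic_avoiders_first: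
  assumes "\<pi> \<in> cyclic_avoiders n k" "2 \<le> n"
  shows "\<pi> 1 \<in> {2..n}"
proof -
  obtain w where c: "cycle_form n \<pi> = 1 # \<pi> 1 # w"
    using cycle_form_Cons_Cons[OF assms(2)] by blast
  moreover have "\<pi> permutes {1..n}" "cyclic_perm n \<pi>"
    using assms(1) unfolding cyclic_avoiders_def by auto
  ultimately have "set (\<pi> 1 # w) = {2..n}"
    using set_cycle_form_tail by blast
  then show ?thesis
    by (metis list.set_intros(1))
qed

lemma cyclic_avoiders_fibre:
  assumes m: "m \<in> {2..n}"
  shows "{\<pi> \<in> cyclic_avoiders n k. \<pi> 1 = m} =
    (\<lambda>(\<sigma>, \<tau>). glue m \<sigma> \<tau>) ` ({\<sigma> \<in> cyclic_avoiders m k. \<sigma> 1 = m} \<times> cyclic_avoiders (n + 1 - m) k)"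
proof (intro equalityI subsetI)
  have n: "m + (n + 1 - m) - 1 = n" "1 \<le> n + 1 - m"
    using m by auto
  fix \<pi>
  assume "\<pi> \<in> {\<pi> \<in> cyclic_avoiders n k. \<pi> 1 = m}"
  then have \<pi>: "\<pi> \<in> cyclic_avoiders n k" "\<pi> 1 = m"
    by auto
  then obtain \<sigma> \<tau> where \<sigma>: "\<sigma> permutes {1..m}" "cyclic_perm m \<sigma>" "\<sigma> 1 = m"
    and \<tau>: "\<tau> permutes {1..n + 1 - m}" "cyclic_perm (n + 1 - m) \<tau>" and eq: "\<pi> = glue m \<sigma> \<tau>"
    using glue_decomposition[of \<pi> n] m unfolding cyclic_avoiders_def avoids_213_iff by auto
  then have "\<sigma> \<in> cyclic_avoiders m k" "\<tau> \<in> cyclic_avoiders (n + 1 - m) k"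
    using glue_mem_iff[OF \<sigma> _ \<tau> n(2), of k] \<pi>(1) m n(1) by auto
  with \<sigma>(3) eq show "\<pi> \<in> (\<lambda>(\<sigma>, \<tau>). glue m \<sigma> \<tau>) `
      ({\<sigma> \<in> cyclic_avoiders m k. \<sigma> 1 = m} \<times> cyclic_avoiders (n + 1 - m) k)"
    by auto
next
  have n: "m + (n + 1 - m) - 1 = n" "1 \<le> n + 1 - m"
    using m by auto
  fix \<pi>
  assume "\<pi> \<in> (\<lambda>(\<sigma>, \<tau>). glue m \<sigma> \<tau>) `
      ({\<sigma> \<in> cyclic_avoiders m k. \<sigma> 1 = m} \<times> cyclic_avoiders (n + 1 - m) k)"
  then obtain \<sigma> \<tau> where \<sigma>: "\<sigma> \<in> cyclic_avoiders m k" "\<sigma> 1 = m"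
    and \<tau>: "\<tau> \<in> cyclic_avoiders (n + 1 - m) k" and eq: "\<pi> = glue m \<sigma> \<tau>"
    by auto
  then have "\<pi> \<in> cyclic_avoiders n k"
    using glue_mem_iff[of \<sigma> m \<tau> "n + 1 - m" k] m n unfolding cyclic_avoiders_def by auto
  moreover have "\<pi> 1 = m"
    using eq \<sigma>(2) m by (simp add: glue_low)
  ultimately show "\<pi> \<in> {\<pi> \<in> cyclic_avoiders n k. \<pi> 1 = m}"
    by simp
qed

lemma card_cyclic_avoiders_fibre:
  assumes m: "m \<in> {2..n}"
  shows "card {\<pi> \<in> cyclic_avoiders n k. \<pi> 1 = m} = b_213 m k * a_213 (n + 1 - m) k"
proof -
  have "inj_on (\<lambda>(\<sigma>, \<tau>). glue m \<sigma> \<tau>)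
      ({\<sigma> \<in> cyclic_avoiders m k. \<sigma> 1 = m} \<times> cyclic_avoiders (n + 1 - m) k)"
  proof (rule inj_onI)
    fix x y
    assume x: "x \<in> {\<sigma> \<in> cyclic_avoiders m k. \<sigma> 1 = m} \<times> cyclic_avoiders (n + 1 - m) k"
      and y: "y \<in> {\<sigma> \<in> cyclic_avoiders m k. \<sigma> 1 = m} \<times> cyclic_avoiders (n + 1 - m) k"
      and eq: "(\<lambda>(\<sigma>, \<tau>). glue m \<sigma> \<tau>) x = (\<lambda>(\<sigma>, \<tau>). glue m \<sigma> \<tau>) y"
    obtain \<sigma> \<tau> \<sigma>' \<tau>' where xy: "x = (\<sigma>, \<tau>)" "y = (\<sigma>', \<tau>')"
      by fastforce
    have "\<sigma> = \<sigma>' \<and> \<tau> = \<tau>'"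
      by (rule glue_inj[of \<sigma> m \<sigma>' \<tau> "n + 1 - m" \<tau>'])
        (use x y eq xy m in \<open>auto simp: cyclic_avoiders_def\<close>)
    then show "x = y"
      using xy by simp
  qed
  then show ?thesis
    unfolding cyclic_avoiders_fibre[OF m] a_213_eq_card b_213_eq_card
    by (simp add: card_image card_cartesian_product)
qed

theorem lemma2p2:
  fixes n k :: nat
  assumes "n \<ge> 2" and "k \<ge> 3"
  shows "a_213 n k = (\<Sum>j=2..n. b_213 j k * a_213 (n + 1 - j) k)"
proof -
  have "cyclic_avoiders n k = (\<Union>m\<in>{2..n}. {\<pi> \<in> cyclic_avoiders n k. \<pi> 1 = m})"
    using cyclic_avoiders_first assms(1) by blast
  then have "a_213 n k = card (\<Union>m\<in>{2..n}. {\<pi> \<in> cyclic_avoiders n k. \<pi> 1 = m})"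
    by (simp add: a_213_eq_card)
  also have "\<dots> = (\<Sum>m=2..n. card {\<pi> \<in> cyclic_avoiders n k. \<pi> 1 = m})"
    by (rule card_UN_disjoint) (auto simp: finite_cyclic_avoiders)
  also have "\<dots> = (\<Sum>j=2..n. b_213 j k * a_213 (n + 1 - j) k)"
    by (rule sum.cong[OF refl]) (erule card_cyclic_avoiders_fibre)
  finally show ?thesis .
qed

end
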